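(* Let $\mathfrak{g}$ be a complete Lie algebra. Then $\mathrm{HL}^2(\mathfrak{g},\mathfrak{g}_{\mathrm{ad}})\cong\mathrm{H}^2(\mathfrak{g},\mathfrak{g})$ and $\mathrm{HL}^3(\mathfrak{g},\mathfrak{g}_{\mathrm{ad}})\cong\mathrm{H}^3(\mathfrak{g},\mathfrak{g})$.
   Context: A Lie algebra $\mathfrak{g}$ is complete if $\mathrm{H}^0(\mathfrak{g},\mathfrak{g})=\mathrm{H}^1(\mathfrak{g},\mathfrak{g})=0$ (Chevalley–Eilenberg cohomology with adjoint coefficients). $\mathfrak{g}$ is regarded as a left Leibniz algebra with $xy=[x,y]$, and $\mathfrak{g}_{\mathrm{ad}}$ is the (symmetric) Leibniz bimodule $\mathfrak{g}$ with left and right multiplication as actions. $\mathrm{HL}^n(\mathfrak{g},M)$ is the cohomology of $\mathrm{Hom}(\mathfrak{g}^{\otimes n},M)$ with $(\mathrm{d}^nf)(x_1,\dots,x_{n+1})=\sum_{i=1}^n(-1)^{i+1}x_i\cdot f(\dots,\hat{x}_i,\dots)+(-1)^{n+1}f(x_1,\dots,x_n)\cdot x_{n+1}+\sum_{i<j}(-1)^if(x_1,\dots,\hat{x}_i,\dots,x_ix_j,\dots,x_{n+1})$ ($x_ix_j$ in the $j$-th position). *)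

theory Defs
  imports Complex_Main "HOL-Library.Function_Algebras"
begin

definition lie_algebra :: "('k::field \<Rightarrow> 'g::ab_group_add \<Rightarrow> 'g) \<Rightarrow> ('g \<Rightarrow> 'g \<Rightarrow> 'g) \<Rightarrow> bool" where
  "lie_algebra scale br \<longleftrightarrow>
     Vector_Spaces.vector_space scale \<and>
     (\<forall>x y z. br (x + y) z = br x z + br y z) \<and>
     (\<forall>x y z. br x (y + z) = br x y + br x z) \<and>
     (\<forall>c x y. br (scale c x) y = scale c (br x y)) \<and>
     (\<forall>c x y. br x (scale c y) = scale c (br x y)) \<and>
     (\<forall>x. br x x = 0) \<and>
     (\<forall>x y z. br x (br y z) + br y (br z x) + br z (br x y) = 0)"

text \<open>n-cochains: maps g^n \<rightarrow> g, represented as functions on lists of length n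
(value 0 on lists of any other length), linear in each argument, i.e.
elements of Hom(g^{\<otimes>n}, g).\<close>

definition multilinear :: "('k::field \<Rightarrow> 'g::ab_group_add \<Rightarrow> 'g) \<Rightarrow> nat \<Rightarrow> ('g list \<Rightarrow> 'g) \<Rightarrow> bool" where
  "multilinear scale n f \<longleftrightarrow>
     (\<forall>xs. length xs \<noteq> n \<longrightarrow> f xs = 0) \<and>
     (\<forall>xs i y z. length xs = n \<and> i < n \<longrightarrow>
         f (xs[i := y + z]) = f (xs[i := y]) + f (xs[i := z])) \<and>
     (\<forall>xs i c y. length xs = n \<and> i < n \<longrightarrow>
         f (xs[i := scale c y]) = scale c (f (xs[i := y])))"

text \<open>Alternating cochains = Hom(\<Lambda>^n g, g): vanish when two arguments coincide.\<close>
definition alternating :: "('k::field \<Rightarrow> 'g::ab_group_add \<Rightarrow> 'g) \<Rightarrow> nat \<Rightarrow> ('g list \<Rightarrow> 'g) \<Rightarrow> bool" where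
  "alternating scale n f \<longleftrightarrow> multilinear scale n f \<and>
     (\<forall>xs i j. length xs = n \<and> i < j \<and> j < n \<and> xs ! i = xs ! j \<longrightarrow> f xs = 0)"

definition sgnp :: "nat \<Rightarrow> 'g::ab_group_add \<Rightarrow> 'g" where
  "sgnp i v = (if even i then v else - v)"

definition remove_at :: "nat \<Rightarrow> 'a list \<Rightarrow> 'a list" where
  "remove_at i xs = take i xs @ drop (Suc i) xs"

text \<open>Leibniz differential d^n with coefficients in g_ad (left action x\<cdot>m = [x,m],
right action m\<cdot>x = [m,x], product x_i x_j = [x_i,x_j]), 0-based indices:
(d f)(x_0..x_n) = \<Sum>_{i<n} (-1)^i [x_i, f(..omit x_i..)] + (-1)^{n+1} [f(x_0..x_{n-1}), x_n]
 + \<Sum>_{i<j\<le>n} (-1)^{i+1} f(x_0,..,omit x_i,..,[x_i,x_j] (at place of x_j),..,x_n).\<close>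
definition dL :: "('g::ab_group_add \<Rightarrow> 'g \<Rightarrow> 'g) \<Rightarrow> nat \<Rightarrow> ('g list \<Rightarrow> 'g) \<Rightarrow> ('g list \<Rightarrow> 'g)" where
  "dL br n f = (\<lambda>xs. if length xs \<noteq> Suc n then 0 else
      (\<Sum>i<n. sgnp i (br (xs ! i) (f (remove_at i xs))))
      + sgnp (Suc n) (br (f (take n xs)) (xs ! n))
      + (\<Sum>j\<le>n. \<Sum>i<j. sgnp (Suc i) (f (remove_at i (xs[j := br (xs ! i) (xs ! j)])))))"

definition dCE :: "('g::ab_group_add \<Rightarrow> 'g \<Rightarrow> 'g) \<Rightarrow> nat \<Rightarrow> ('g list \<Rightarrow> 'g) \<Rightarrow> ('g list \<Rightarrow> 'g)" where
  "dCE br n f = (\<lambda>xs. if length xs \<noteq> Suc n then 0 else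
      (\<Sum>i\<le>n. sgnp i (br (xs ! i) (f (remove_at i xs))))
      + (\<Sum>j\<le>n. \<Sum>i<j. sgnp (i + j) (f (br (xs ! i) (xs ! j) # remove_at i (remove_at j xs)))))"

definition CL where "CL scale n = {f. multilinear scale n f}"
definition ZL where "ZL scale br n = {f \<in> CL scale n. dL br n f = 0}"
definition BL where "BL scale br n = (if n = 0 then {0} else dL br (n - 1) ` CL scale (n - 1))"

definition CCE where "CCE scale n = {f. alternating scale n f}"
definition ZCE where "ZCE scale br n = {f \<in> CCE scale n. dCE br n f = 0}"
definition BCE where "BCE scale br n = (if n = 0 then {0} else dCE br (n - 1) ` CCE scale (n - 1))"

text \<open>Isomorphism of the quotient spaces Z1/B1 and Z2/B2, written out on representatives:
a linear map Z1 \<rightarrow> Z2 inducing a bijection Z1/B1 \<rightarrow> Z2/B2.\<close>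
definition quot_iso :: "('k::field \<Rightarrow> 'g::ab_group_add \<Rightarrow> 'g) \<Rightarrow> ('g list \<Rightarrow> 'g) set \<Rightarrow> ('g list \<Rightarrow> 'g) set
     \<Rightarrow> ('g list \<Rightarrow> 'g) set \<Rightarrow> ('g list \<Rightarrow> 'g) set \<Rightarrow> bool" where
  "quot_iso scale Z1 B1 Z2 B2 \<longleftrightarrow> (\<exists>\<phi>.
     (\<forall>a\<in>Z1. \<phi> a \<in> Z2) \<and>
     (\<forall>a\<in>Z1. \<forall>b\<in>Z1. \<phi> (a + b) = \<phi> a + \<phi> b) \<and>
     (\<forall>c. \<forall>a\<in>Z1. \<phi> (\<lambda>xs. scale c (a xs)) = (\<lambda>xs. scale c (\<phi> a xs))) \<and>
     (\<forall>a\<in>Z1. \<phi> a \<in> B2 \<longleftrightarrow> a \<in> B1) \<and>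
     (\<forall>b\<in>Z2. \<exists>a\<in>Z1. b - \<phi> a \<in> B2))"

definition HL_iso_H where
  "HL_iso_H scale br n \<longleftrightarrow> quot_iso scale (ZL scale br n) (BL scale br n) (ZCE scale br n) (BCE scale br n)"

definition complete_lie where
  "complete_lie scale br \<longleftrightarrow> ZCE scale br 0 = BCE scale br 0 \<and> ZCE scale br 1 = BCE scale br 1"

end

theory Submission
  imports Defs
begin

text \<open>A Leibniz 2-cocycle \<open>f\<close> satisfies \<open>(d f)(x, x, a) = -[f(x, x), a]\<close>, so \<open>f(x, x)\<close> is central,
  hence zero because \<open>H\<^sup>0 = 0\<close>; thus \<open>f\<close> is alternating. On alternating cochains the Leibniz and
  Chevalley--Eilenberg differentials agree in degrees \<open>\<le> 3\<close>, which identifies the two complexes in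
  degree 2.

  For a Leibniz 3-cocycle \<open>f\<close> the cocycle identity makes \<open>a \<mapsto> f(x, x, a)\<close> a derivation, which is
  inner because \<open>H\<^sup>1 = 0\<close>: \<open>f(x, x, a) = [e(x), a]\<close> for a unique \<open>e(x)\<close>, and \<open>e\<close> is a quadratic
  map. Choosing a basis and a linear order on it, \<open>e\<close> is the diagonal of a bilinear map \<open>L\<close>, even in
  characteristic 2. Then \<open>f + d L\<close> vanishes on \<open>(x, x, a)\<close>, and the cocycle identity forces it to vanish on
  \<open>(c, a, a)\<close> too, so it is an alternating cocycle. Since \<open>e\<close> and \<open>L\<close> depend linearly on \<open>f\<close>, the map
  \<open>f \<mapsto> f + d L\<close> is linear and moves each cocycle by a coboundary, which gives the isomorphism in
  degree 3.\<close>

lemma sgnp_0 [simp]: "sgnp 0 v = v"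
  by (simp add: sgnp_def)

lemma sgnp_Suc: "sgnp (Suc n) v = - sgnp n v"
  by (simp add: sgnp_def)

lemma sgnp_add: "sgnp i (u + v) = sgnp i u + sgnp i v"
  by (simp add: sgnp_def)

lemma sgnp_diff: "sgnp i (u - v) = sgnp i u - sgnp i v"
  by (simp add: sgnp_def)

lemma length_2_conv: "length xs = 2 \<longleftrightarrow> (\<exists>a b. xs = [a, b])"
  by (auto simp: numeral_2_eq_2 length_Suc_conv)

lemma length_3_conv: "length xs = 3 \<longleftrightarrow> (\<exists>a b c. xs = [a, b, c])"
  by (auto simp: numeral_3_eq_3 length_Suc_conv)

lemma length_4_conv: "length xs = 4 \<longleftrightarrow> (\<exists>a b c d. xs = [a, b, c, d])"
  by (auto simp: numeral_eq_Suc length_Suc_conv)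

lemma dCE_0_apply: "dCE br 0 f [a] = br a (f [])"
  by (simp add: dCE_def remove_at_def)

lemma dL_1_apply: "dL br 1 f [a, b] = br a (f [b]) + br (f [a]) b - f [br a b]"
  by (simp add: dL_def remove_at_def sgnp_Suc)

lemma dCE_1_apply: "dCE br 1 f [a, b] = br a (f [b]) - br b (f [a]) - f [br a b]"
  by (simp add: dCE_def remove_at_def sgnp_Suc)

lemma dL_2_apply:
  "dL br 2 f [a, b, c] =
     br a (f [b, c]) - br b (f [a, c]) - br (f [a, b]) c
     - f [br a b, c] - f [b, br a c] + f [a, br b c]"
  by (simp add: dL_def remove_at_def sgnp_Suc numeral_2_eq_2 lessThan_Suc atMost_Suc algebra_simps)

lemma dCE_2_apply:
  "dCE br 2 f [a, b, c] =
     br a (f [b, c]) - br b (f [a, c]) + br c (f [a, b])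
     - f [br a b, c] + f [br a c, b] - f [br b c, a]"
  by (simp add: dCE_def remove_at_def sgnp_Suc numeral_2_eq_2 lessThan_Suc atMost_Suc algebra_simps)

lemma dL_3_apply:
  "dL br 3 f [a, b, c, d] =
     br a (f [b, c, d]) - br b (f [a, c, d]) + br c (f [a, b, d]) + br (f [a, b, c]) d
     - f [br a b, c, d] - f [b, br a c, d] - f [b, c, br a d]
     + f [a, br b c, d] + f [a, c, br b d] - f [a, b, br c d]"
  by (simp add: dL_def remove_at_def sgnp_Suc numeral_3_eq_3 lessThan_Suc atMost_Suc algebra_simps)

lemma dCE_3_apply:
  "dCE br 3 f [a, b, c, d] =
     br a (f [b, c, d]) - br b (f [a, c, d]) + br c (f [a, b, d]) - br d (f [a, b, c])
     - f [br a b, c, d] + f [br a c, b, d] - f [br a d, b, c]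
     - f [br b c, a, d] + f [br b d, a, c] - f [br c d, a, b]"
  by (simp add: dCE_def remove_at_def sgnp_Suc numeral_3_eq_3 lessThan_Suc atMost_Suc algebra_simps)

lemma quot_iso_refl: "0 \<in> B \<Longrightarrow> quot_iso scale Z B Z B"
  unfolding quot_iso_def by (rule exI[of _ id]) force

lemma quot_isoI_retraction:
  assumes "Z2 \<subseteq> Z1"
    and maps_to: "\<And>a. a \<in> Z1 \<Longrightarrow> \<phi> a \<in> Z2"
    and "\<And>a b. a \<in> Z1 \<Longrightarrow> b \<in> Z1 \<Longrightarrow> \<phi> (a + b) = \<phi> a + \<phi> b"
    and "\<And>c a. a \<in> Z1 \<Longrightarrow> \<phi> (\<lambda>xs. scale c (a xs)) = (\<lambda>xs. scale c (\<phi> a xs))"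
    and retract: "\<And>a. a \<in> Z1 \<Longrightarrow> a - \<phi> a \<in> B1"
    and B1_add: "\<And>b b'. b \<in> B1 \<Longrightarrow> b' \<in> B1 \<Longrightarrow> b + b' \<in> B1"
    and B1_diff: "\<And>b b'. b \<in> B1 \<Longrightarrow> b' \<in> B1 \<Longrightarrow> b - b' \<in> B1"
    and "B2 \<subseteq> B1"
    and B1_Z2: "\<And>b. b \<in> B1 \<Longrightarrow> b \<in> Z2 \<Longrightarrow> b \<in> B2"
    and Z2_diff: "\<And>a b. a \<in> Z2 \<Longrightarrow> b \<in> Z2 \<Longrightarrow> a - b \<in> Z2"
  shows "quot_iso scale Z1 B1 Z2 B2"
  unfolding quot_iso_def
proof (rule exI[of _ \<phi>], intro conjI ballI allI)
  fix a assume a: "a \<in> Z1"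
  show "\<phi> a \<in> B2 \<longleftrightarrow> a \<in> B1"
  proof
    assume "\<phi> a \<in> B2"
    then have "\<phi> a + (a - \<phi> a) \<in> B1" using \<open>B2 \<subseteq> B1\<close> a by (blast intro: B1_add retract)
    then show "a \<in> B1" by simp
  next
    assume "a \<in> B1"
    then have "a - (a - \<phi> a) \<in> B1" using a by (blast intro: B1_diff retract)
    then show "\<phi> a \<in> B2" using a by (auto intro: B1_Z2 maps_to)
  qed
next
  fix b assume b: "b \<in> Z2"
  then have "b - \<phi> b \<in> B2" using \<open>Z2 \<subseteq> Z1\<close> by (blast intro: B1_Z2 retract Z2_diff maps_to)
  then show "\<exists>a\<in>Z1. b - \<phi> a \<in> B2" using b \<open>Z2 \<subseteq> Z1\<close> by blast
qed (use assms in auto)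

context vector_space
begin

lemma sgnp_scale: "sgnp i (scale c v) = scale c (sgnp i v)"
  by (simp add: sgnp_def scale_minus_right)

lemma multilinear_slot_hom:
  assumes "multilinear scale n f" "length xs = n" "i < n"
  shows "module_hom scale scale (\<lambda>y. f (xs[i := y]))"
  using assms by (simp add: multilinear_def module_hom_def module_hom_axioms_def module_axioms)

lemma multilinear_2_hom:
  assumes "multilinear scale 2 f"
  shows "module_hom scale scale (\<lambda>x. f [x, b])" "module_hom scale scale (\<lambda>x. f [a, x])"
  using multilinear_slot_hom[OF assms, of "[a, b]" 0] multilinear_slot_hom[OF assms, of "[a, b]" 1]
  by simp_all

lemma multilinear_3_hom:
  assumes "multilinear scale 3 f"
  shows "module_hom scale scale (\<lambda>x. f [x, b, c])" "module_hom scale scale (\<lambda>x. f [a, x, c])"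
    "module_hom scale scale (\<lambda>x. f [a, b, x])"
  using multilinear_slot_hom[OF assms, of "[a, b, c]" 0] multilinear_slot_hom[OF assms, of "[a, b, c]" 1]
    multilinear_slot_hom[OF assms, of "[a, b, c]" 2]
  by (simp_all add: numeral_2_eq_2)

lemmas multilinear_2_simps =
  module_hom.add[OF multilinear_2_hom(1)] module_hom.diff[OF multilinear_2_hom(1)]
  module_hom.neg[OF multilinear_2_hom(1)] module_hom.zero[OF multilinear_2_hom(1)]
  module_hom.scale[OF multilinear_2_hom(1)]
  module_hom.add[OF multilinear_2_hom(2)] module_hom.diff[OF multilinear_2_hom(2)]
  module_hom.neg[OF multilinear_2_hom(2)] module_hom.zero[OF multilinear_2_hom(2)]
  module_hom.scale[OF multilinear_2_hom(2)]

lemmas multilinear_3_simps =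
  module_hom.add[OF multilinear_3_hom(1)] module_hom.diff[OF multilinear_3_hom(1)]
  module_hom.neg[OF multilinear_3_hom(1)] module_hom.zero[OF multilinear_3_hom(1)]
  module_hom.scale[OF multilinear_3_hom(1)]
  module_hom.add[OF multilinear_3_hom(2)] module_hom.diff[OF multilinear_3_hom(2)]
  module_hom.neg[OF multilinear_3_hom(2)] module_hom.zero[OF multilinear_3_hom(2)]
  module_hom.scale[OF multilinear_3_hom(2)]
  module_hom.add[OF multilinear_3_hom(3)] module_hom.diff[OF multilinear_3_hom(3)]
  module_hom.neg[OF multilinear_3_hom(3)] module_hom.zero[OF multilinear_3_hom(3)]
  module_hom.scale[OF multilinear_3_hom(3)]

lemma multilinear_2I:
  assumes "\<And>xs. length xs \<noteq> 2 \<Longrightarrow> f xs = 0"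
    and "\<And>x y b. f [x + y, b] = f [x, b] + f [y, b]" "\<And>c x b. f [scale c x, b] = scale c (f [x, b])"
    and "\<And>a x y. f [a, x + y] = f [a, x] + f [a, y]" "\<And>a c x. f [a, scale c x] = scale c (f [a, x])"
  shows "multilinear scale 2 f"
  unfolding multilinear_def
proof (intro conjI allI impI)
  fix xs :: "'b list" and i :: nat assume "length xs = 2 \<and> i < 2"
  then obtain a b where "xs = [a, b]" "i = 0 \<or> i = 1" by (auto simp: length_2_conv less_2_cases_iff)
  then show "f (xs[i := y + z]) = f (xs[i := y]) + f (xs[i := z])"
    and "f (xs[i := scale c y]) = scale c (f (xs[i := y]))" for y z c
    using assms by auto
qed (use assms in auto)

lemma multilinear_3I:
  assumes "\<And>xs. length xs \<noteq> 3 \<Longrightarrow> f xs = 0"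
    and "\<And>x y b c. f [x + y, b, c] = f [x, b, c] + f [y, b, c]"
    and "\<And>k x b c. f [scale k x, b, c] = scale k (f [x, b, c])"
    and "\<And>a x y c. f [a, x + y, c] = f [a, x, c] + f [a, y, c]"
    and "\<And>a k x c. f [a, scale k x, c] = scale k (f [a, x, c])"
    and "\<And>a b x y. f [a, b, x + y] = f [a, b, x] + f [a, b, y]"
    and "\<And>a b k x. f [a, b, scale k x] = scale k (f [a, b, x])"
  shows "multilinear scale 3 f"
  unfolding multilinear_def
proof (intro conjI allI impI)
  fix xs :: "'b list" and i :: nat assume "length xs = 3 \<and> i < 3"
  moreover from this obtain a b c where "xs = [a, b, c]" by (auto simp: length_3_conv)
  ultimately have "xs = [a, b, c]" "i = 0 \<or> i = 1 \<or> i = 2" by auto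
  then show "f (xs[i := y + z]) = f (xs[i := y]) + f (xs[i := z])"
    and "f (xs[i := scale k y]) = scale k (f (xs[i := y]))" for y z k
    using assms by (auto simp: numeral_2_eq_2)
qed (use assms in auto)

lemma multilinear_add: "multilinear scale n f \<Longrightarrow> multilinear scale n g \<Longrightarrow> multilinear scale n (f + g)"
  by (simp add: multilinear_def scale_right_distrib)

lemma multilinear_diff: "multilinear scale n f \<Longrightarrow> multilinear scale n g \<Longrightarrow> multilinear scale n (f - g)"
  by (simp add: multilinear_def scale_right_diff_distrib)

lemma alternating_imp_multilinear: "alternating scale n f \<Longrightarrow> multilinear scale n f"
  by (simp add: alternating_def)

lemma alternating_diff: "alternating scale n f \<Longrightarrow> alternating scale n g \<Longrightarrow> alternating scale n (f - g)"
  by (simp add: alternating_def multilinear_diff)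

lemma multilinear_2_swap:
  assumes "multilinear scale 2 f" "\<And>x. f [x, x] = 0"
  shows "f [b, a] = - f [a, b]"
proof -
  have "f [a + b, a + b] = f [a, a] + f [a, b] + (f [b, a] + f [b, b])"
    by (simp add: multilinear_2_simps[OF assms(1)] ac_simps)
  then show ?thesis by (simp add: assms(2) add_eq_0_iff)
qed

lemma multilinear_3_swap_01:
  assumes "multilinear scale 3 f" "\<And>x c. f [x, x, c] = 0"
  shows "f [b, a, c] = - f [a, b, c]"
proof -
  have "f [a + b, a + b, c] = f [a, a, c] + f [a, b, c] + (f [b, a, c] + f [b, b, c])"
    by (simp add: multilinear_3_simps[OF assms(1)] ac_simps)
  then show ?thesis by (simp add: assms(2) add_eq_0_iff)
qed

lemma multilinear_3_swap_12:
  assumes "multilinear scale 3 f" "\<And>x c. f [c, x, x] = 0"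
  shows "f [c, b, a] = - f [c, a, b]"
proof -
  have "f [c, a + b, a + b] = f [c, a, a] + f [c, a, b] + (f [c, b, a] + f [c, b, b])"
    by (simp add: multilinear_3_simps[OF assms(1)] ac_simps)
  then show ?thesis by (simp add: assms(2) add_eq_0_iff)
qed

lemma alternating_2_iff: "alternating scale 2 f \<longleftrightarrow> multilinear scale 2 f \<and> (\<forall>x. f [x, x] = 0)"
  unfolding alternating_def
proof safe
  fix x assume alt: "\<forall>xs i j. length xs = 2 \<and> i < j \<and> j < 2 \<and> xs ! i = xs ! j \<longrightarrow> f xs = 0"
  show "f [x, x] = 0" using alt[rule_format, of "[x, x]" 0 1] by simp
qed (auto simp: length_2_conv less_2_cases_iff)

lemma alternating_3_iff:
  "alternating scale 3 f \<longleftrightarrow> multilinear scale 3 f \<and> (\<forall>x c. f [x, x, c] = 0) \<and> (\<forall>x c. f [c, x, x] = 0)"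
  unfolding alternating_def
proof safe
  fix x c assume alt: "\<forall>xs i j. length xs = 3 \<and> i < j \<and> j < 3 \<and> xs ! i = xs ! j \<longrightarrow> f xs = 0"
  show "f [x, x, c] = 0" using alt[rule_format, of "[x, x, c]" 0 1] by simp
  show "f [c, x, x] = 0" using alt[rule_format, of "[c, x, x]" 1 2] by (simp add: numeral_2_eq_2)
next
  fix xs :: "'b list" and i j
  assume ml: "multilinear scale 3 f" and diag01: "\<forall>x c. f [x, x, c] = 0" and diag12: "\<forall>x c. f [c, x, x] = 0"
    and "length xs = 3" and ij: "i < j" "j < 3" "xs ! i = xs ! j"
  then obtain a b c where xs: "xs = [a, b, c]" by (auto simp: length_3_conv)
  have "f [a, b, a] = 0" for a b
    using multilinear_3_swap_01[OF ml, of b a a] diag01 diag12 by simp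
  with ij diag01 diag12 show "f xs = 0"
    unfolding xs by (auto simp: less_Suc_eq numeral_3_eq_3)
qed

lemma alternating_2_swap: "alternating scale 2 f \<Longrightarrow> f [b, a] = - f [a, b]"
  by (rule multilinear_2_swap) (simp_all add: alternating_2_iff)

lemma alternating_3_swap_01: "alternating scale 3 f \<Longrightarrow> f [b, a, c] = - f [a, b, c]"
  by (rule multilinear_3_swap_01) (simp_all add: alternating_3_iff)

lemma alternating_3_swap_12: "alternating scale 3 f \<Longrightarrow> f [c, b, a] = - f [c, a, b]"
  by (rule multilinear_3_swap_12) (simp_all add: alternating_3_iff)

lemma bilinear_eq_0_on_span:
  assumes "\<And>y. Vector_Spaces.linear scale scale (\<lambda>x. P x y)" "\<And>x. Vector_Spaces.linear scale scale (P x)"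
    and "\<And>b b'. b \<in> B \<Longrightarrow> b' \<in> B \<Longrightarrow> P b b' = 0" and "x \<in> span B" "y \<in> span B"
  shows "P x y = 0"
proof -
  interpret pair: vector_space_pair scale scale ..
  have "P x b' = 0" if "b' \<in> B" for b'
    using pair.linear_eq_on[OF assms(1) pair.linear_zero \<open>x \<in> span B\<close>] assms(3) that by simp
  then show ?thesis
    using pair.linear_eq_on[OF assms(2) pair.linear_zero \<open>y \<in> span B\<close>] by simp
qed

end

definition quadratic_map :: "('k::field \<Rightarrow> 'g::ab_group_add \<Rightarrow> 'g) \<Rightarrow> ('g \<Rightarrow> 'g) \<Rightarrow> bool" where
  "quadratic_map scale e \<longleftrightarrow>
     (\<forall>c x. e (scale c x) = scale c (scale c (e x))) \<and>
     (\<forall>y. Vector_Spaces.linear scale scale (\<lambda>x. e (x + y) - e x - e y))"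

text \<open>The lift of \<open>e\<close> takes, on pairs of basis vectors, the value \<open>e\<close> on the diagonal, the
  polarization of \<open>e\<close> above the diagonal and \<open>0\<close> below it. Its symmetrization is then the
  polarization of \<open>e\<close>, which gives \<open>L x x = e x\<close> without dividing by 2.\<close>

definition upper_polarization :: "'g rel \<Rightarrow> ('g::ab_group_add \<Rightarrow> 'g) \<Rightarrow> 'g \<Rightarrow> 'g \<Rightarrow> 'g" where
  "upper_polarization r e b b' =
     (if b = b' then e b else if (b, b') \<in> r then e (b + b') - e b - e b' else 0)"

definition diagonal_lift ::
  "('k::field \<Rightarrow> 'g::ab_group_add \<Rightarrow> 'g) \<Rightarrow> 'g set \<Rightarrow> 'g rel \<Rightarrow> ('g \<Rightarrow> 'g) \<Rightarrow> 'g \<Rightarrow> 'g \<Rightarrow> 'g" where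
  "diagonal_lift scale B r e x y =
     vector_space_pair.construct scale scale B
       (\<lambda>b. vector_space_pair.construct scale scale B (upper_polarization r e b) y) x"

context vector_space
begin

interpretation pair: vector_space_pair scale scale ..

context
  fixes B :: "'b set" and r :: "'b rel"
  assumes independent_B: "independent B"
begin

lemma linear_diagonal_lift_left: "Vector_Spaces.linear scale scale (\<lambda>x. diagonal_lift scale B r e x y)"
  unfolding diagonal_lift_def by (rule pair.linear_construct[OF independent_B])

lemma linear_diagonal_lift_right: "Vector_Spaces.linear scale scale (diagonal_lift scale B r e x)"
proof -
  let ?g = "upper_polarization r e"
  have lin: "Vector_Spaces.linear scale scale (pair.construct B g)" for g
    by (rule pair.linear_construct[OF independent_B])
  have "pair.construct B (\<lambda>b. pair.construct B (?g b) (y + y')) x =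
      pair.construct B (\<lambda>b. pair.construct B (?g b) y) x + pair.construct B (\<lambda>b. pair.construct B (?g b) y') x"
    for y y' by (simp add: pair.linear_add[OF lin] pair.construct_add[OF independent_B])
  moreover have "pair.construct B (\<lambda>b. pair.construct B (?g b) (scale c y)) x =
      scale c (pair.construct B (\<lambda>b. pair.construct B (?g b) y) x)"
    for c y by (simp add: pair.linear_scale[OF lin] pair.construct_scale[OF independent_B])
  ultimately show ?thesis
    unfolding diagonal_lift_def Vector_Spaces.linear_iff using vector_space_axioms by blast
qed

lemma diagonal_lift_add:
  "diagonal_lift scale B r (\<lambda>v. e v + e' v) x y = diagonal_lift scale B r e x y + diagonal_lift scale B r e' x y"
proof -
  have "upper_polarization r (\<lambda>v. e v + e' v) b = (\<lambda>b'. upper_polarization r e b b' + upper_polarization r e' b b')" for b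
    by (auto simp: upper_polarization_def)
  then show ?thesis
    unfolding diagonal_lift_def by (simp add: pair.construct_add[OF independent_B])
qed

lemma diagonal_lift_scale:
  "diagonal_lift scale B r (\<lambda>v. scale c (e v)) x y = scale c (diagonal_lift scale B r e x y)"
proof -
  have "upper_polarization r (\<lambda>v. scale c (e v)) b = (\<lambda>b'. scale c (upper_polarization r e b b'))" for b
    by (auto simp: upper_polarization_def scale_right_diff_distrib)
  then show ?thesis
    unfolding diagonal_lift_def by (simp add: pair.construct_scale[OF independent_B])
qed

lemma diagonal_lift_basis:
  "b \<in> B \<Longrightarrow> b' \<in> B \<Longrightarrow> diagonal_lift scale B r e b b' = upper_polarization r e b b'"
  by (simp add: diagonal_lift_def pair.construct_basis[OF independent_B])

context
  fixes e :: "'b \<Rightarrow> 'b"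
  assumes antisym_r: "antisym r" and total_r: "total_on B r"
    and quadratic: "quadratic_map scale e"
begin

lemma quadratic_scale: "e (scale c x) = scale c (scale c (e x))"
  using quadratic by (simp add: quadratic_map_def)

lemma upper_polarization_symmetrization:
  assumes "b \<in> B" "b' \<in> B"
  shows "upper_polarization r e b b' + upper_polarization r e b' b = e (b + b') - e b - e b'"
proof (cases "b = b'")
  case True
  have "e (b + b) = e (scale (1 + 1) b)"
    by (simp only: scale_left_distrib scale_one)
  also have "\<dots> = (e b + e b) + (e b + e b)"
    unfolding quadratic_scale by (simp only: scale_left_distrib scale_one)
  finally show ?thesis
    using True by (simp add: upper_polarization_def)
next
  case False
  then have "(b, b') \<in> r \<and> (b', b) \<notin> r \<or> (b', b) \<in> r \<and> (b, b') \<notin> r"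
    using antisym_r total_r assms by (auto simp: antisym_def total_on_def)
  with False show ?thesis
    by (auto simp: upper_polarization_def add.commute)
qed

lemma diagonal_lift_symmetrization:
  assumes span_B: "span B = UNIV"
  shows "diagonal_lift scale B r e x y + diagonal_lift scale B r e y x = e (x + y) - e x - e y"
proof -
  define p where "p x y = e (x + y) - e x - e y" for x y
  have p_linear: "Vector_Spaces.linear scale scale (\<lambda>x. p x y)" for y
    using quadratic by (simp add: quadratic_map_def p_def)
  have p_sym: "p x y = p y x" for x y
    by (simp add: p_def add.commute)
  let ?P = "\<lambda>x y. diagonal_lift scale B r e x y + diagonal_lift scale B r e y x - p x y"
  have "?P x y = 0"
  proof (rule bilinear_eq_0_on_span[where P = ?P and B = B])
    show "Vector_Spaces.linear scale scale (\<lambda>x. ?P x y)" for y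
      by (intro pair.linear_compose_sub pair.linear_compose_add p_linear
          linear_diagonal_lift_left linear_diagonal_lift_right)
    show "Vector_Spaces.linear scale scale (?P x)" for x
      unfolding p_sym[of x]
      by (intro pair.linear_compose_sub pair.linear_compose_add p_linear
          linear_diagonal_lift_left linear_diagonal_lift_right)
  qed (simp_all add: span_B p_def diagonal_lift_basis upper_polarization_symmetrization)
  then show ?thesis by (simp add: p_def)
qed

lemma diagonal_lift_diag:
  assumes span_B: "span B = UNIV"
  shows "diagonal_lift scale B r e x x = e x"
proof -
  define Q where "Q y = diagonal_lift scale B r e y y - e y" for y
  have Q_add: "Q (y + y') = Q y + Q y'" for y y'
    using diagonal_lift_symmetrization[OF span_B, of y y']
    by (simp add: Q_def pair.linear_add[OF linear_diagonal_lift_left]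
        pair.linear_add[OF linear_diagonal_lift_right] algebra_simps)
  have Q_scale: "Q (scale c y) = scale c (scale c (Q y))" for c y
    by (simp add: Q_def quadratic_scale scale_right_diff_distrib
        pair.linear_scale[OF linear_diagonal_lift_left] pair.linear_scale[OF linear_diagonal_lift_right])
  have "subspace {y. Q y = 0}"
    unfolding subspace_def using Q_add Q_scale Q_scale[of 0 0] by simp
  moreover have "Q b = 0" if "b \<in> B" for b
    using that by (simp add: Q_def diagonal_lift_basis upper_polarization_def)
  ultimately have "Q x = 0"
    using span_induct[of x B "\<lambda>y. Q y = 0"] span_B by auto
  then show ?thesis by (simp add: Q_def)
qed

end

end

end

locale lie_alg =
  fixes scale :: "'k::field \<Rightarrow> 'g::ab_group_add \<Rightarrow> 'g" and br :: "'g \<Rightarrow> 'g \<Rightarrow> 'g"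
  assumes lie_algebra: "lie_algebra scale br"
begin

sublocale vector_space scale
  using lie_algebra by (simp add: lie_algebra_def)

lemma bracket_hom_left: "module_hom scale scale (\<lambda>x. br x y)"
  using lie_algebra by (simp add: lie_algebra_def module_hom_def module_hom_axioms_def module_axioms)

lemma bracket_hom_right: "module_hom scale scale (br x)"
  using lie_algebra by (simp add: lie_algebra_def module_hom_def module_hom_axioms_def module_axioms)

lemmas bracket_add_left = module_hom.add[OF bracket_hom_left]
lemmas bracket_scale_left = module_hom.scale[OF bracket_hom_left]

lemmas bracket_simps =
  bracket_add_left module_hom.diff[OF bracket_hom_left]
  module_hom.neg[OF bracket_hom_left] module_hom.zero[OF bracket_hom_left]
  bracket_scale_left
  module_hom.add[OF bracket_hom_right] module_hom.diff[OF bracket_hom_right]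
  module_hom.neg[OF bracket_hom_right] module_hom.zero[OF bracket_hom_right]
  module_hom.scale[OF bracket_hom_right]

lemma bracket_self [simp]: "br x x = 0"
  using lie_algebra by (simp add: lie_algebra_def)

lemma bracket_anticomm: "br y x = - br x y"
proof -
  have "br (x + y) (x + y) = br x x + br x y + (br y x + br y y)"
    by (simp only: bracket_simps add_ac)
  then have "br x y + br y x = 0" by simp
  then show ?thesis by (simp add: add_eq_0_iff)
qed

lemma jacobi: "br x (br y z) + br y (br z x) + br z (br x y) = 0"
  using lie_algebra by (simp add: lie_algebra_def)

lemma bracket_bracket_left: "br (br x y) z = br x (br y z) - br y (br x z)"
proof -
  have "br (br x y) z = - br z (br x y)"
    by (rule bracket_anticomm)
  also have "\<dots> = br x (br y z) + br y (br z x)"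
    using jacobi[of x y z] by (simp add: neg_eq_iff_add_eq_0 add_ac)
  also have "br z x = - br x z"
    by (rule bracket_anticomm)
  finally show ?thesis
    by (simp add: bracket_simps)
qed

lemma dL_1_eq_dCE_1: "dL br 1 f = dCE br 1 f"
proof
  fix xs :: "'g list"
  show "dL br 1 f xs = dCE br 1 f xs"
  proof (cases "length xs = 2")
    case True
    then obtain a b where "xs = [a, b]" by (auto simp: length_2_conv)
    then show ?thesis
      by (simp only: dL_1_apply dCE_1_apply) (simp add: bracket_anticomm[of "f [a]"])
  qed (simp add: dL_def dCE_def)
qed

lemma dL_2_eq_dCE_2:
  assumes "alternating scale 2 f"
  shows "dL br 2 f = dCE br 2 f"
proof
  fix xs :: "'g list"
  note swap = alternating_2_swap[OF assms]
  show "dL br 2 f xs = dCE br 2 f xs"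
  proof (cases "length xs = 3")
    case True
    then obtain a b c where "xs = [a, b, c]" by (auto simp: length_3_conv)
    then show ?thesis
      using swap[of "br b c" a] swap[of "br a c" b]
      by (simp add: dL_2_apply dCE_2_apply bracket_anticomm[of "f [a, b]" c])
  qed (simp add: dL_def dCE_def)
qed

lemma dL_3_eq_dCE_3:
  assumes "alternating scale 3 f"
  shows "dL br 3 f = dCE br 3 f"
proof
  fix xs :: "'g list"
  note swap01 = alternating_3_swap_01[OF assms] and swap12 = alternating_3_swap_12[OF assms]
  have rotate: "f [a, b, c] = f [c, a, b]" for a b c
    using swap12[of a c b] swap01[of a c b] by simp
  show "dL br 3 f xs = dCE br 3 f xs"
  proof (cases "length xs = 4")
    case True
    then obtain a b c d where "xs = [a, b, c, d]" by (auto simp: length_4_conv)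
    then show ?thesis
      using swap01[of b "br a c" d] swap01[of a "br b c" d]
        rotate[of b c "br a d"] rotate[of a c "br b d"] rotate[of a b "br c d"]
      by (simp add: dL_3_apply dCE_3_apply bracket_anticomm[of "f [a, b, c]" d])
  qed (simp add: dL_def dCE_def)
qed

lemma dL_3_dL_2_eq_0:
  assumes "multilinear scale 2 g"
  shows "dL br 3 (dL br 2 g) = 0"
proof
  fix xs :: "'g list"
  show "dL br 3 (dL br 2 g) xs = 0 xs"
  proof (cases "length xs = 4")
    case True
    then obtain a b c d where "xs = [a, b, c, d]" by (auto simp: length_4_conv)
    then show ?thesis
      by (simp only: dL_3_apply dL_2_apply zero_fun_apply bracket_simps bracket_bracket_left
          multilinear_2_simps[OF assms] bracket_anticomm[of "g _"])
        (simp add: algebra_simps)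
  qed (simp add: dL_def)
qed

lemma dL_2_diag:
  assumes "multilinear scale 2 g"
  shows "dL br 2 g [x, x, a] = - br (g [x, x]) a"
  by (simp add: dL_2_apply multilinear_2_simps[OF assms])

lemma multilinear_dL_2:
  assumes g: "multilinear scale 2 g"
  shows "multilinear scale 3 (dL br 2 g)"
proof (rule multilinear_3I)
  show "length xs \<noteq> 3 \<Longrightarrow> dL br 2 g xs = 0" for xs
    by (simp add: dL_def)
qed (simp_all add: dL_2_apply bracket_simps multilinear_2_simps[OF g] algebra_simps
    scale_right_diff_distrib scale_right_distrib)

lemma dL_add: "dL br n (f + g) = dL br n f + dL br n g"
  by (rule ext) (simp add: dL_def sum.distrib bracket_simps sgnp_add algebra_simps)

lemma dL_diff: "dL br n (f - g) = dL br n f - dL br n g"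
  by (rule ext) (simp add: dL_def sum_subtractf bracket_simps sgnp_diff algebra_simps)

lemma dL_scale: "dL br n (\<lambda>xs. scale c (f xs)) = (\<lambda>xs. scale c (dL br n f xs))"
  by (rule ext) (simp add: dL_def scale_sum_right bracket_simps sgnp_scale scale_right_distrib)

lemma zero_in_BL: "0 \<in> BL scale br n"
proof -
  have "dL br (n - 1) 0 = 0"
    using dL_diff[of _ 0 0] by simp
  then show ?thesis
    by (auto simp: BL_def CL_def multilinear_def image_iff intro: exI[of _ 0])
qed

lemma dCE_diff: "dCE br n (f - g) = dCE br n f - dCE br n g"
  by (rule ext) (simp add: dCE_def sum_subtractf bracket_simps sgnp_diff algebra_simps)

lemma BL_add: "n \<noteq> 0 \<Longrightarrow> b \<in> BL scale br n \<Longrightarrow> b' \<in> BL scale br n \<Longrightarrow> b + b' \<in> BL scale br n"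
  by (auto simp: BL_def CL_def dL_add[symmetric] intro!: imageI multilinear_add)

lemma BL_diff: "n \<noteq> 0 \<Longrightarrow> b \<in> BL scale br n \<Longrightarrow> b' \<in> BL scale br n \<Longrightarrow> b - b' \<in> BL scale br n"
  by (auto simp: BL_def CL_def dL_diff[symmetric] intro!: imageI multilinear_diff)

lemma ZCE_diff: "a \<in> ZCE scale br n \<Longrightarrow> b \<in> ZCE scale br n \<Longrightarrow> a - b \<in> ZCE scale br n"
  by (simp add: ZCE_def CCE_def alternating_diff dCE_diff)

lemma ZCE_3_subset_ZL_3: "ZCE scale br 3 \<subseteq> ZL scale br 3"
  by (auto simp: ZL_def CL_def ZCE_def CCE_def dL_3_eq_dCE_3 alternating_imp_multilinear)

lemma BCE_3_subset_BL_3: "BCE scale br 3 \<subseteq> BL scale br 3"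
  by (auto simp: BL_def CL_def BCE_def CCE_def dL_2_eq_dCE_2[symmetric] alternating_imp_multilinear)

end

locale complete_lie_alg = lie_alg scale br
  for scale :: "'k::field \<Rightarrow> 'g::ab_group_add \<Rightarrow> 'g" and br +
  assumes complete: "complete_lie scale br"
begin

lemma ZCE_0_eq_0: "f \<in> ZCE scale br 0 \<Longrightarrow> f = 0"
  using complete by (auto simp: complete_lie_def BCE_def)

lemma ZCE_1_coboundary: "f \<in> ZCE scale br 1 \<Longrightarrow> \<exists>g. f = dCE br 0 g"
  using complete by (auto simp: complete_lie_def BCE_def)

lemma central_eq_0:
  assumes "\<And>a. br c a = 0"
  shows "c = 0"
proof -
  define f where "f xs = (if xs = [] then c else 0)" for xs :: "'g list"
  have "alternating scale 0 f"
    by (simp add: alternating_def multilinear_def f_def)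
  moreover have "dCE br 0 f = 0"
  proof
    fix xs :: "'g list"
    show "dCE br 0 f xs = 0 xs"
    proof (cases "length xs = 1")
      case True
      then obtain a where "xs = [a]" by (auto simp: length_Suc_conv)
      then show ?thesis using assms[of a] by (simp add: dCE_0_apply f_def bracket_anticomm[of a])
    qed (simp add: dCE_def)
  qed
  ultimately have "f = 0"
    by (intro ZCE_0_eq_0) (simp add: ZCE_def CCE_def)
  then have "f [] = 0" by simp
  then show ?thesis by (simp add: f_def)
qed

lemma bracket_left_cancel:
  assumes "\<And>a. br u a = br v a"
  shows "u = v"
  using central_eq_0[of "u - v"] assms by (simp add: bracket_simps)

lemma derivation_inner:
  assumes D_add: "\<And>x y. D (x + y) = D x + D y" and D_scale: "\<And>c x. D (scale c x) = scale c (D x)"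
    and D_bracket: "\<And>a b. D (br a b) = br a (D b) + br (D a) b"
  shows "\<exists>c. \<forall>a. D a = br c a"
proof -
  define f where "f xs = (if length xs = 1 then D (hd xs) else 0)" for xs :: "'g list"
  have "multilinear scale 1 f"
    unfolding multilinear_def
  proof (intro conjI allI impI)
    fix xs :: "'g list" and i :: nat assume "length xs = 1 \<and> i < 1"
    then obtain a where "xs = [a]" "i = 0" by (auto simp: length_Suc_conv)
    then show "f (xs[i := y + z]) = f (xs[i := y]) + f (xs[i := z])"
      and "f (xs[i := scale c y]) = scale c (f (xs[i := y]))" for y z c
      by (simp_all add: f_def D_add D_scale)
  qed (simp add: f_def)
  moreover have "dCE br 1 f = 0"
  proof
    fix xs :: "'g list"
    show "dCE br 1 f xs = 0 xs"
    proof (cases "length xs = 2")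
      case True
      then obtain a b where "xs = [a, b]" by (auto simp: length_2_conv)
      then show ?thesis
        by (simp only: dCE_1_apply) (simp add: f_def D_bracket bracket_anticomm[of b])
    qed (simp add: dCE_def)
  qed
  ultimately obtain g where "f = dCE br 0 g"
    using ZCE_1_coboundary by (auto simp: ZCE_def CCE_def alternating_def)
  have "D a = br (- g []) a" for a
  proof -
    have "D a = f [a]" by (simp add: f_def)
    also have "\<dots> = br a (g [])" by (simp add: \<open>f = dCE br 0 g\<close> dCE_0_apply)
    finally show ?thesis by (simp add: bracket_anticomm[of a] bracket_simps)
  qed
  then show ?thesis by blast
qed

lemma alternating_if_dL_2_diag:
  assumes "multilinear scale 2 g" "\<And>x a. dL br 2 g [x, x, a] = 0"
  shows "alternating scale 2 g"
proof -
  have "g [x, x] = 0" for x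
    by (rule central_eq_0) (use assms dL_2_diag[OF assms(1)] in simp)
  with assms(1) show ?thesis by (simp add: alternating_2_iff)
qed

lemma ZL_2_eq_ZCE_2: "ZL scale br 2 = ZCE scale br 2"
proof
  show "ZL scale br 2 \<subseteq> ZCE scale br 2"
  proof
    fix f assume "f \<in> ZL scale br 2"
    then have "multilinear scale 2 f" "dL br 2 f = 0" by (auto simp: ZL_def CL_def)
    then have "alternating scale 2 f" by (simp add: alternating_if_dL_2_diag)
    with \<open>dL br 2 f = 0\<close> show "f \<in> ZCE scale br 2" by (simp add: ZCE_def CCE_def dL_2_eq_dCE_2)
  qed
  show "ZCE scale br 2 \<subseteq> ZL scale br 2"
    by (auto simp: ZL_def CL_def ZCE_def CCE_def dL_2_eq_dCE_2 alternating_imp_multilinear)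
qed

lemma BL_2_eq_BCE_2: "BL scale br 2 = BCE scale br 2"
proof -
  have "CL scale 1 = CCE scale 1" by (auto simp: CL_def CCE_def alternating_def)
  then show ?thesis using dL_1_eq_dCE_1 by (simp add: BL_def BCE_def)
qed

theorem HL_iso_H_2: "HL_iso_H scale br 2"
  using zero_in_BL[of 2] by (simp add: HL_iso_H_def ZL_2_eq_ZCE_2 BL_2_eq_BCE_2 quot_iso_refl)

lemma alternating_BL_3_in_BCE_3:
  assumes "b \<in> BL scale br 3" "alternating scale 3 b"
  shows "b \<in> BCE scale br 3"
proof -
  obtain g where g: "multilinear scale 2 g" and b: "b = dL br 2 g"
    using assms(1) by (auto simp: BL_def CL_def)
  have "alternating scale 2 g"
    by (rule alternating_if_dL_2_diag[OF g]) (use assms(2) b in \<open>simp add: alternating_3_iff\<close>)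
  then show ?thesis
    by (auto simp: b BCE_def CCE_def dL_2_eq_dCE_2)
qed

text \<open>The cocycle identity at \<open>(c, a, a, b)\<close> reduces to \<open>[f(c, a, a), b] = 0\<close>.\<close>

lemma ZL_3_alternating_if_diag:
  assumes f: "f \<in> ZL scale br 3" and diag: "\<And>x a. f [x, x, a] = 0"
  shows "alternating scale 3 f"
proof -
  have ml: "multilinear scale 3 f" and cocycle: "dL br 3 f = 0"
    using f by (auto simp: ZL_def CL_def)
  have "f [c, a, a] = 0" for c a
  proof (rule central_eq_0)
    fix b
    have "dL br 3 f [c, a, a, b] = 0" using cocycle by simp
    then show "br (f [c, a, a]) b = 0"
      using multilinear_3_swap_01[OF ml diag, of "br c a" a b]
      by (simp add: dL_3_apply multilinear_3_simps[OF ml] diag bracket_simps)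
  qed
  with ml diag show ?thesis by (simp add: alternating_3_iff)
qed

definition ad_diag :: "('g list \<Rightarrow> 'g) \<Rightarrow> 'g \<Rightarrow> 'g" where
  "ad_diag f x = (THE c. \<forall>a. f [x, x, a] = br c a)"

lemma ad_diag_eqI:
  assumes "\<And>a. f [x, x, a] = br c a"
  shows "ad_diag f x = c"
  unfolding ad_diag_def
proof (rule the_equality)
  fix c' assume "\<forall>a. f [x, x, a] = br c' a"
  with assms show "c' = c" by (auto intro: bracket_left_cancel)
qed (use assms in blast)

lemma bracket_ad_diag:
  assumes f: "f \<in> ZL scale br 3"
  shows "br (ad_diag f x) a = f [x, x, a]"
proof -
  have ml: "multilinear scale 3 f" and cocycle: "dL br 3 f = 0"
    using f by (auto simp: ZL_def CL_def)
  have "\<exists>c. \<forall>a. f [x, x, a] = br c a"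
  proof (rule derivation_inner)
    fix u v
    have "dL br 3 f [x, x, u, v] = 0" using cocycle by simp
    then show "f [x, x, br u v] = br u (f [x, x, v]) + br (f [x, x, u]) v"
      by (simp add: dL_3_apply multilinear_3_simps[OF ml] eq_diff_eq')
  qed (simp_all add: multilinear_3_simps[OF ml])
  then obtain c where "\<And>a. f [x, x, a] = br c a" by blast
  then show ?thesis using ad_diag_eqI by metis
qed

lemma ad_diag_polarization:
  assumes f: "f \<in> ZL scale br 3"
  shows "br (ad_diag f (u + v) - ad_diag f u - ad_diag f v) a = f [u, v, a] + f [v, u, a]"
  using f by (simp add: ZL_def CL_def bracket_simps bracket_ad_diag multilinear_3_simps algebra_simps)

lemma quadratic_map_ad_diag:
  assumes f: "f \<in> ZL scale br 3"
  shows "quadratic_map scale (ad_diag f)"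
proof -
  have ml: "multilinear scale 3 f" using f by (simp add: ZL_def CL_def)
  let ?p = "\<lambda>x y. ad_diag f (x + y) - ad_diag f x - ad_diag f y"
  have "ad_diag f (scale c x) = scale c (scale c (ad_diag f x))" for c x
    by (rule ad_diag_eqI) (simp add: bracket_simps bracket_ad_diag[OF f] multilinear_3_simps[OF ml])
  moreover have "?p (x + x') y = ?p x y + ?p x' y" for x x' y
    by (rule bracket_left_cancel, simp only: bracket_add_left ad_diag_polarization[OF f]
        multilinear_3_simps[OF ml], simp only: ac_simps)
  moreover have "?p (scale c x) y = scale c (?p x y)" for c x y
    by (rule bracket_left_cancel)
      (simp only: bracket_scale_left ad_diag_polarization[OF f] multilinear_3_simps[OF ml]
        scale_right_distrib)
  ultimately show ?thesis
    by (simp add: quadratic_map_def Vector_Spaces.linear_iff vector_space_axioms)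
qed

lemma ad_diag_add:
  "f \<in> ZL scale br 3 \<Longrightarrow> f' \<in> ZL scale br 3 \<Longrightarrow> ad_diag (f + f') = (\<lambda>x. ad_diag f x + ad_diag f' x)"
  by (rule ext, rule ad_diag_eqI) (simp add: bracket_ad_diag bracket_simps)

lemma ad_diag_scale:
  "f \<in> ZL scale br 3 \<Longrightarrow> ad_diag (\<lambda>xs. scale c (f xs)) = (\<lambda>x. scale c (ad_diag f x))"
  by (rule ext, rule ad_diag_eqI) (simp add: bracket_ad_diag bracket_simps)

definition diag_correction :: "'g set \<Rightarrow> 'g rel \<Rightarrow> ('g list \<Rightarrow> 'g) \<Rightarrow> 'g list \<Rightarrow> 'g" where
  "diag_correction B r f xs =
     (if length xs = 2 then - diagonal_lift scale B r (ad_diag f) (xs ! 0) (xs ! 1) else 0)"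

definition alternating_repr :: "'g set \<Rightarrow> 'g rel \<Rightarrow> ('g list \<Rightarrow> 'g) \<Rightarrow> 'g list \<Rightarrow> 'g" where
  "alternating_repr B r f = f - dL br 2 (diag_correction B r f)"

context
  fixes B :: "'g set" and r :: "'g rel"
  assumes independent_B: "independent B" and span_B: "span B = UNIV"
    and antisym_r: "antisym r" and total_r: "total_on B r"
begin

interpretation pair: vector_space_pair scale scale ..

lemma multilinear_diag_correction: "multilinear scale 2 (diag_correction B r f)"
  by (rule multilinear_2I)
    (simp_all add: diag_correction_def scale_minus_right
      pair.linear_add[OF linear_diagonal_lift_left[OF independent_B]]
      pair.linear_scale[OF linear_diagonal_lift_left[OF independent_B]]
      pair.linear_add[OF linear_diagonal_lift_right[OF independent_B]]
      pair.linear_scale[OF linear_diagonal_lift_right[OF independent_B]])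

lemma diag_correction_diag:
  assumes "f \<in> ZL scale br 3"
  shows "diag_correction B r f [x, x] = - ad_diag f x"
  using diagonal_lift_diag[OF independent_B antisym_r total_r quadratic_map_ad_diag[OF assms] span_B]
  by (simp add: diag_correction_def)

lemma diag_correction_add:
  "f \<in> ZL scale br 3 \<Longrightarrow> f' \<in> ZL scale br 3 \<Longrightarrow>
     diag_correction B r (f + f') = diag_correction B r f + diag_correction B r f'"
  by (rule ext) (simp add: diag_correction_def ad_diag_add diagonal_lift_add[OF independent_B])

lemma diag_correction_scale:
  "f \<in> ZL scale br 3 \<Longrightarrow>
     diag_correction B r (\<lambda>xs. scale c (f xs)) = (\<lambda>xs. scale c (diag_correction B r f xs))"
  by (rule ext)
    (simp add: diag_correction_def ad_diag_scale diagonal_lift_scale[OF independent_B] scale_minus_right)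

lemma alternating_repr_in_ZCE_3:
  assumes f: "f \<in> ZL scale br 3"
  shows "alternating_repr B r f \<in> ZCE scale br 3"
proof -
  have "multilinear scale 3 f" "dL br 3 f = 0" using f by (auto simp: ZL_def CL_def)
  then have "alternating_repr B r f \<in> ZL scale br 3"
    by (simp add: ZL_def CL_def alternating_repr_def multilinear_diff multilinear_dL_2
        multilinear_diag_correction dL_diff dL_3_dL_2_eq_0)
  moreover have "alternating_repr B r f [x, x, a] = 0" for x a
    by (simp add: alternating_repr_def dL_2_diag multilinear_diag_correction diag_correction_diag[OF f]
        bracket_ad_diag[OF f] bracket_simps)
  ultimately have "alternating scale 3 (alternating_repr B r f)"
    by (rule ZL_3_alternating_if_diag)
  with \<open>alternating_repr B r f \<in> ZL scale br 3\<close> show ?thesis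
    by (simp add: ZL_def ZCE_def CCE_def dL_3_eq_dCE_3)
qed

lemma alternating_repr_add:
  "f \<in> ZL scale br 3 \<Longrightarrow> f' \<in> ZL scale br 3 \<Longrightarrow>
     alternating_repr B r (f + f') = alternating_repr B r f + alternating_repr B r f'"
  by (simp add: alternating_repr_def diag_correction_add dL_add)

lemma alternating_repr_scale:
  "f \<in> ZL scale br 3 \<Longrightarrow>
     alternating_repr B r (\<lambda>xs. scale c (f xs)) = (\<lambda>xs. scale c (alternating_repr B r f xs))"
  by (simp add: alternating_repr_def diag_correction_scale dL_scale fun_eq_iff scale_right_diff_distrib)

lemma diff_alternating_repr_in_BL_3: "f - alternating_repr B r f \<in> BL scale br 3"
  by (simp add: alternating_repr_def BL_def CL_def multilinear_diag_correction)

end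

theorem HL_iso_H_3: "HL_iso_H scale br 3"
proof -
  obtain B where B: "independent B" "span B = UNIV"
    by (metis basis_exists top.extremum_uniqueI)
  obtain r :: "'g rel" where "well_order_on UNIV r"
    using well_order_on by blast
  then have r: "antisym r" "total_on B r"
    by (auto simp: well_order_on_def linear_order_on_def partial_order_on_def total_on_def)
  have BL_ZCE: "b \<in> BCE scale br 3" if "b \<in> BL scale br 3" "b \<in> ZCE scale br 3" for b
    using that by (simp add: ZCE_def CCE_def alternating_BL_3_in_BCE_3)
  show ?thesis
    unfolding HL_iso_H_def
    by (rule quot_isoI_retraction[OF ZCE_3_subset_ZL_3 alternating_repr_in_ZCE_3[OF B r]
          alternating_repr_add[OF B r] alternating_repr_scale[OF B r]
          diff_alternating_repr_in_BL_3[OF B r] BL_add[OF numeral_neq_zero] BL_diff[OF numeral_neq_zero]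
          BCE_3_subset_BL_3 BL_ZCE ZCE_diff])
qed

end

theorem corollary2p9:
  fixes scale :: "'k::field \<Rightarrow> 'g::ab_group_add \<Rightarrow> 'g"
    and br :: "'g \<Rightarrow> 'g \<Rightarrow> 'g"
  assumes "lie_algebra scale br"
    and "complete_lie scale br"
  shows "HL_iso_H scale br 2 \<and> HL_iso_H scale br 3"
proof -
  interpret complete_lie_alg scale br
    using assms by (simp add: complete_lie_alg_def complete_lie_alg_axioms_def lie_alg_def)
  show ?thesis using HL_iso_H_2 HL_iso_H_3 by blast
qed

end
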